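(* Let $k$ be a natural number and let $p$ be the smallest prime with $p > 2^{k-1}+1$. For natural numbers $q,\ell$ let $G_{q,\ell}$ denote the graph consisting of two vertices $s,t$ joined by $q$ internally disjoint paths, each of length $\ell$. Then $G_{q,2^{k-1}}$ is not $\mathbb{Z}_2^k$-connected for any odd $q$, and $G_{q,2^{k-1}}$ is $\mathbb{Z}_p$-connected whenever $q \geq p$.
   Context: Graphs are finite, may have multiple edges but no loops. $\mathbb{Z}_2^k$ denotes the direct product of $k$ copies of $\mathbb{Z}_2$. For an orientation $D$ of $G$ and a vertex $v$, $E^+(v)$ (resp. $E^-(v)$) is the set of edges directed out of (resp. into) $v$. For an Abelian group $\Gamma$, a graph $G$ is $\Gamma$-connected if for some (equivalently, any) orientation $D$ of $G$ and every function $\beta: V(G)\to\Gamma$ with $\sum_{v\in V(G)}\beta(v)=0$ there exists $f: E(G)\to\Gamma$ with $f(e)\neq 0$ for all edges $e$ and $\sum_{e\in E^+(v)} f(e)-\sum_{e\in E^-(v)} f(e)=\beta(v)$ for all $v\in V(G)$. *)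

theory Defs
  imports "HOL-Algebra.Algebra" "HOL-Computational_Algebra.Primes"
begin

text \<open>A finite multigraph without loops is given by a vertex set V, an edge set E and a map
  ends assigning to each edge its set of two distinct end vertices (parallel edges allowed).\<close>

definition orientation :: "'v set \<Rightarrow> 'e set \<Rightarrow> ('e \<Rightarrow> 'v set) \<Rightarrow> ('e \<Rightarrow> 'v \<times> 'v) \<Rightarrow> bool" where
  "orientation V E ends D \<longleftrightarrow>
     (\<forall>e\<in>E. fst (D e) \<in> V \<and> snd (D e) \<in> V \<and> fst (D e) \<noteq> snd (D e)
            \<and> {fst (D e), snd (D e)} = ends e)"

text \<open>Group connectivity for an abelian group Gamma (HOL-Algebra, written multiplicatively:
  the group operation plays the role of +, the unit the role of 0).\<close>

definition group_connected ::
  "('g, 'm) monoid_scheme \<Rightarrow> 'v set \<Rightarrow> 'e set \<Rightarrow> ('e \<Rightarrow> 'v set) \<Rightarrow> bool" where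
  "group_connected \<Gamma> V E ends \<longleftrightarrow>
     (\<exists>D. orientation V E ends D \<and>
        (\<forall>\<beta> \<in> V \<rightarrow>\<^sub>E carrier \<Gamma>. finprod \<Gamma> \<beta> V = \<one>\<^bsub>\<Gamma>\<^esub> \<longrightarrow>
           (\<exists>f \<in> E \<rightarrow>\<^sub>E carrier \<Gamma>. (\<forall>e\<in>E. f e \<noteq> \<one>\<^bsub>\<Gamma>\<^esub>) \<and>
              (\<forall>v\<in>V. finprod \<Gamma> f {e\<in>E. fst (D e) = v}
                       \<otimes>\<^bsub>\<Gamma>\<^esub> inv\<^bsub>\<Gamma>\<^esub> (finprod \<Gamma> f {e\<in>E. snd (D e) = v}) = \<beta> v))))"

text \<open>The graph G_{q,l}: vertices s, t and internal vertices Inner i j (path i, position j,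
  0 < j < l); edge (i,j) with i < q, j < l joins the j-th and (j+1)-th vertex of path i.\<close>

datatype pvert = S | T | Inner nat nat

definition path_vert :: "nat \<Rightarrow> nat \<Rightarrow> nat \<Rightarrow> pvert" where
  "path_vert l i j = (if j = 0 then S else if j = l then T else Inner i j)"

definition theta_V :: "nat \<Rightarrow> nat \<Rightarrow> pvert set" where
  "theta_V q l = {S, T} \<union> {Inner i j | i j. i < q \<and> 0 < j \<and> j < l}"

definition theta_E :: "nat \<Rightarrow> nat \<Rightarrow> (nat \<times> nat) set" where
  "theta_E q l = {(i, j). i < q \<and> j < l}"

definition theta_ends :: "nat \<Rightarrow> nat \<times> nat \<Rightarrow> pvert set" where
  "theta_ends l e = {path_vert l (fst e) (snd e), path_vert l (fst e) (Suc (snd e))}"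

definition Z2pow :: "nat \<Rightarrow> (nat \<Rightarrow> int) monoid" where
  "Z2pow k = product_group {..<k} (\<lambda>_. integer_mod_group 2)"

end

theory Submission
  imports Defs
begin

text \<open>
  \<open>\<int>\<^sub>2\<^sup>k\<close>: let \<open>b\<^sub>0, ..., b\<^bsub>2^(k-1)-1\<^esub>\<close> enumerate the vectors with vanishing first
  coordinate and demand \<open>b\<^sub>j + b\<^bsub>j-1\<^esub>\<close> at the \<open>j\<close>-th inner vertex of every path and \<open>0\<close> at \<open>s\<close>.
  Over \<open>\<int>\<^sub>2\<^sup>k\<close> orientations do not matter, and a flow meeting these demands carries
  \<open>f(e\<^sub>i\<^sub>0) + b\<^sub>j\<close> on the \<open>j\<close>-th edge of path \<open>i\<close>. It is nowhere zero only if every first edge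
  has first coordinate \<open>1\<close>, and then, \<open>q\<close> being odd, the boundary at \<open>s\<close> has first coordinate \<open>1\<close>.

  \<open>\<int>\<^sub>p\<close>: orient all paths from \<open>s\<close> to \<open>t\<close>. The value \<open>a\<^sub>i\<close> on the first edge of path \<open>i\<close>
  determines the flow along the path, which is nowhere zero as long as \<open>a\<^sub>i\<close> avoids
  \<open>\<ell> \<le> p - 2\<close> residues. So each \<open>a\<^sub>i\<close> ranges over at least two residues, and as \<open>q \<ge> p - 1\<close>,
  the subset sums of the \<open>q\<close> nonzero differences cover \<open>\<int>\<^sub>p\<close>, which lets us meet the
  demand at \<open>s\<close>. The demand at \<open>t\<close> is then met automatically, since demands and boundaries both sum
  to zero.
\<close>

definition flow_boundary ::
  "('g, 'm) monoid_scheme \<Rightarrow> 'e set \<Rightarrow> ('e \<Rightarrow> 'v \<times> 'v) \<Rightarrow> ('e \<Rightarrow> 'g) \<Rightarrow> 'v \<Rightarrow> 'g" where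
  "flow_boundary \<Gamma> E D f v =
     finprod \<Gamma> f {e\<in>E. fst (D e) = v} \<otimes>\<^bsub>\<Gamma>\<^esub> inv\<^bsub>\<Gamma>\<^esub> finprod \<Gamma> f {e\<in>E. snd (D e) = v}"

lemma group_connected_iff:
  "group_connected \<Gamma> V E ends \<longleftrightarrow>
     (\<exists>D. orientation V E ends D \<and>
        (\<forall>\<beta> \<in> V \<rightarrow>\<^sub>E carrier \<Gamma>. finprod \<Gamma> \<beta> V = \<one>\<^bsub>\<Gamma>\<^esub> \<longrightarrow>
           (\<exists>f \<in> E \<rightarrow>\<^sub>E carrier \<Gamma>. (\<forall>e\<in>E. f e \<noteq> \<one>\<^bsub>\<Gamma>\<^esub>) \<and>
              (\<forall>v\<in>V. flow_boundary \<Gamma> E D f v = \<beta> v))))"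
  by (simp add: group_connected_def flow_boundary_def)

lemma orientation_tail_head_disjoint:
  assumes "orientation V E ends D"
  shows "{e\<in>E. fst (D e) = v} \<inter> {e\<in>E. snd (D e) = v} = {}"
  using assms unfolding orientation_def by auto

lemma orientation_tail_head_Un:
  assumes "orientation V E ends D"
  shows "{e\<in>E. fst (D e) = v} \<union> {e\<in>E. snd (D e) = v} = {e\<in>E. v \<in> ends e}"
  using assms unfolding orientation_def by (auto; metis insertE empty_iff)

context comm_group
begin

lemma flow_boundary_closed:
  "finite E \<Longrightarrow> f \<in> E \<rightarrow> carrier G \<Longrightarrow> flow_boundary G E D f v \<in> carrier G"
  by (auto simp: flow_boundary_def intro!: finprod_closed)

lemma finprod_fibres:
  assumes "finite E" "finite V" "h ` E \<subseteq> V" "f \<in> E \<rightarrow> carrier G"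
  shows "finprod G (\<lambda>v. finprod G f {e\<in>E. h e = v}) V = finprod G f E"
proof -
  have "E = (\<Union>v\<in>V. {e\<in>E. h e = v})"
    using assms(3) by blast
  moreover have "finprod G f (\<Union>v\<in>V. {e\<in>E. h e = v}) = finprod G (\<lambda>v. finprod G f {e\<in>E. h e = v}) V"
    using assms by (intro finprod_UN_disjoint) (auto simp: pairwise_def disjnt_def)
  ultimately show ?thesis
    by simp
qed

text \<open>Every edge leaves one vertex and enters one vertex, so the boundaries sum to zero.\<close>

lemma finprod_flow_boundary:
  assumes D: "orientation V E ends D" and "finite V" "finite E" and f: "f \<in> E \<rightarrow> carrier G"
  shows "finprod G (flow_boundary G E D f) V = \<one>"
proof -
  let ?out = "\<lambda>v. finprod G f {e\<in>E. fst (D e) = v}" and ?in = "\<lambda>v. finprod G f {e\<in>E. snd (D e) = v}"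
  have "fst ` D ` E \<subseteq> V" "snd ` D ` E \<subseteq> V"
    using D by (auto simp: orientation_def)
  then have out: "finprod G ?out V = finprod G f E" and into: "finprod G ?in V = finprod G f E"
    using assms by (auto intro!: finprod_fibres simp: image_image)
  have "flow_boundary G E D f v \<otimes> ?in v = ?out v" for v
    using assms by (simp add: flow_boundary_def m_assoc Pi_iff)
  then have "finprod G (flow_boundary G E D f) V \<otimes> finprod G ?in V = finprod G ?out V"
    using assms by (simp add: flow_boundary_closed Pi_iff flip: finprod_multf)
  then show ?thesis
    using assms by (simp add: out into flow_boundary_closed Pi_iff)
qed

lemma finprod_remove:
  assumes "finite V" "t \<in> V" "h \<in> V \<rightarrow> carrier G"
  shows "finprod G h V = h t \<otimes> finprod G h (V - {t})"
proof -
  have "finprod G h (insert t (V - {t})) = h t \<otimes> finprod G h (V - {t})"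
    using assms by (intro finprod_insert) auto
  then show ?thesis
    using assms by (simp add: insert_absorb)
qed

lemma zero_sum_extension:
  assumes "finite V" "t \<in> V" "\<beta>\<^sub>0 \<in> V - {t} \<rightarrow> carrier G"
  obtains \<beta> where "\<beta> \<in> V \<rightarrow>\<^sub>E carrier G" "finprod G \<beta> V = \<one>" "\<And>v. v \<in> V - {t} \<Longrightarrow> \<beta> v = \<beta>\<^sub>0 v"
proof
  define \<beta> where "\<beta> = (\<lambda>v\<in>V. if v = t then inv (finprod G \<beta>\<^sub>0 (V - {t})) else \<beta>\<^sub>0 v)"
  show "\<beta> \<in> V \<rightarrow>\<^sub>E carrier G"
    using assms by (auto simp: \<beta>_def)
  show "\<beta> v = \<beta>\<^sub>0 v" if "v \<in> V - {t}" for v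
    using that by (simp add: \<beta>_def)
  have "finprod G \<beta> V = \<beta> t \<otimes> finprod G \<beta> (V - {t})"
    using assms by (intro finprod_remove) (auto simp: \<beta>_def)
  also have "finprod G \<beta> (V - {t}) = finprod G \<beta>\<^sub>0 (V - {t})"
    using assms by (intro finprod_cong') (auto simp: \<beta>_def)
  also have "\<beta> t = inv (finprod G \<beta>\<^sub>0 (V - {t}))"
    using assms by (simp add: \<beta>_def)
  finally show "finprod G \<beta> V = \<one>"
    using assms by simp
qed

lemma eq_at_last_if_finprod_eq:
  assumes "finite V" "t \<in> V" "g \<in> V \<rightarrow> carrier G" "\<beta> \<in> V \<rightarrow> carrier G"
    and "finprod G g V = finprod G \<beta> V" and "\<forall>v \<in> V - {t}. g v = \<beta> v"
  shows "g t = \<beta> t"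
proof -
  have "finprod G g (V - {t}) = finprod G \<beta> (V - {t})"
    using assms by (intro finprod_cong') auto
  then show ?thesis
    using assms finprod_remove[of V t g] finprod_remove[of V t \<beta>] by (auto intro: r_cancel finprod_closed)
qed

end

lemma carrier_Z2pow: "carrier (Z2pow k) = (\<Pi>\<^sub>E m\<in>{..<k}. {0..<2})"
  by (simp add: Z2pow_def carrier_integer_mod_group)

lemma one_Z2pow: "\<one>\<^bsub>Z2pow k\<^esub> = (\<lambda>m\<in>{..<k}. 0)"
  by (simp add: Z2pow_def)

lemma mult_Z2pow: "x \<otimes>\<^bsub>Z2pow k\<^esub> y = (\<lambda>m\<in>{..<k}. (x m + y m) mod 2)"
  by (simp add: Z2pow_def)

lemma inv_Z2pow:
  assumes "x \<in> carrier (Z2pow k)"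
  shows "inv\<^bsub>Z2pow k\<^esub> x = (\<lambda>m\<in>{..<k}. (- x m) mod 2)"
proof -
  have "inv\<^bsub>Z2pow k\<^esub> x = (\<lambda>m\<in>{..<k}. inv\<^bsub>integer_mod_group 2\<^esub> x m)"
    unfolding Z2pow_def by (rule inv_product_group) (use assms in \<open>auto simp: Z2pow_def\<close>)
  also have "\<dots> = (\<lambda>m\<in>{..<k}. (- x m) mod 2)"
    using assms by (intro restrict_ext) (auto simp: carrier_Z2pow carrier_integer_mod_group PiE_iff)
  finally show ?thesis .
qed

lemma comm_group_Z2pow: "comm_group (Z2pow k)"
proof (rule group.group_comm_groupI)
  show "group (Z2pow k)"
    unfolding Z2pow_def by (rule product_group) simp
qed (auto simp: mult_Z2pow add.commute)

lemma Z2pow_eq_one_iff: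
  "x \<in> carrier (Z2pow k) \<Longrightarrow> x = \<one>\<^bsub>Z2pow k\<^esub> \<longleftrightarrow> (\<forall>m<k. x m = 0)"
  by (auto simp: one_Z2pow carrier_Z2pow PiE_iff extensional_def)

lemma Z2pow_coordinate_cases:
  assumes "x \<in> carrier (Z2pow k)" "m < k"
  shows "x m = 0 \<or> x m = 1"
proof -
  have "x m \<in> {0..<2}"
    using assms by (simp add: carrier_Z2pow PiE_iff)
  then show ?thesis
    by auto
qed

lemma finprod_Z2pow:
  assumes "finite A" "f \<in> A \<rightarrow> carrier (Z2pow k)" "m < k"
  shows "finprod (Z2pow k) f A m = (\<Sum>a\<in>A. f a m) mod 2"
proof -
  interpret comm_group "Z2pow k"
    by (rule comm_group_Z2pow)
  show ?thesis
    using assms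
  proof (induction A rule: finite_induct)
    case empty
    then show ?case
      by (simp add: one_Z2pow)
  next
    case (insert x F)
    then show ?case
      by (simp add: mult_Z2pow mod_add_right_eq)
  qed
qed

lemma flow_boundary_Z2pow:
  assumes D: "orientation V E ends D" and "finite E" "f \<in> E \<rightarrow> carrier (Z2pow k)" "m < k"
  shows "flow_boundary (Z2pow k) E D f v m = (\<Sum>e | e \<in> E \<and> v \<in> ends e. f e m) mod 2"
proof -
  interpret comm_group "Z2pow k"
    by (rule comm_group_Z2pow)
  let ?O = "{e\<in>E. fst (D e) = v}" and ?I = "{e\<in>E. snd (D e) = v}"
  have minus_mod_2: "(a mod 2 + (- (b mod 2)) mod 2) mod 2 = (a + b) mod 2" for a b :: int
    by presburger
  have "flow_boundary (Z2pow k) E D f v m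
      = ((\<Sum>e\<in>?O. f e m) mod 2 + (- ((\<Sum>e\<in>?I. f e m) mod 2)) mod 2) mod 2"
    using assms by (simp add: flow_boundary_def mult_Z2pow inv_Z2pow finprod_Z2pow Pi_iff)
  also have "\<dots> = ((\<Sum>e\<in>?O. f e m) + (\<Sum>e\<in>?I. f e m)) mod 2"
    by (rule minus_mod_2)
  also have "(\<Sum>e\<in>?O. f e m) + (\<Sum>e\<in>?I. f e m) = (\<Sum>e\<in>?O \<union> ?I. f e m)"
    using assms orientation_tail_head_disjoint[OF D] by (simp add: sum.union_disjoint)
  also have "?O \<union> ?I = {e. e \<in> E \<and> v \<in> ends e}"
    using orientation_tail_head_Un[OF D] by simp
  finally show ?thesis .
qed

lemma finprod_integer_mod_group:
  assumes "finite A" "f \<in> A \<rightarrow> carrier (integer_mod_group n)"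
  shows "finprod (integer_mod_group n) f A = (\<Sum>a\<in>A. f a) mod int n"
proof -
  interpret comm_group "integer_mod_group n"
    by simp
  show ?thesis
    using assms by (induction A rule: finite_induct) (simp_all add: mod_add_right_eq)
qed

lemma mod_in_carrier_integer_mod_group: "x mod int n \<in> carrier (integer_mod_group n)"
  by (simp add: carrier_integer_mod_group)

lemma flow_boundary_integer_mod_group:
  assumes "finite E" "f \<in> E \<rightarrow> carrier (integer_mod_group n)"
  shows "flow_boundary (integer_mod_group n) E D f v
    = ((\<Sum>e | e \<in> E \<and> fst (D e) = v. f e) - (\<Sum>e | e \<in> E \<and> snd (D e) = v. f e)) mod int n"
proof -
  interpret comm_group "integer_mod_group n"
    by simp
  have minus_mod: "(a mod c + (- (b mod c)) mod c) mod c = (a - b) mod c" for a b c :: int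
    by (metis mod_add_right_eq mod_diff_eq diff_conv_add_uminus)
  show ?thesis
    using assms by (simp add: flow_boundary_def finprod_integer_mod_group Pi_iff
        mod_in_carrier_integer_mod_group minus_mod)
qed

lemma finite_theta_E: "finite (theta_E q L)"
proof -
  have "theta_E q L = {..<q} \<times> {..<L}"
    by (auto simp: theta_E_def)
  then show ?thesis
    by simp
qed

lemma finite_theta_V: "finite (theta_V q L)"
proof -
  have "theta_V q L = {S, T} \<union> (\<lambda>(i, j). Inner i j) ` ({..<q} \<times> {0<..<L})"
    by (auto simp: theta_V_def)
  then show ?thesis
    by simp
qed

lemma theta_edges_at_Inner:
  "i < q \<Longrightarrow> 0 < j \<Longrightarrow> j < L \<Longrightarrow>
    {e \<in> theta_E q L. Inner i j \<in> theta_ends L e} = {(i, j - 1), (i, j)}"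
  by (auto simp: theta_E_def theta_ends_def path_vert_def split: if_splits)

lemma theta_edges_at_S:
  "0 < L \<Longrightarrow> {e \<in> theta_E q L. S \<in> theta_ends L e} = (\<lambda>i. (i, 0)) ` {..<q}"
  by (auto simp: theta_E_def theta_ends_def path_vert_def split: if_splits)

definition theta_along :: "nat \<Rightarrow> nat \<times> nat \<Rightarrow> pvert \<times> pvert" where
  "theta_along L e = (path_vert L (fst e) (snd e), path_vert L (fst e) (Suc (snd e)))"

lemma orientation_theta_along:
  "orientation (theta_V q L) (theta_E q L) (theta_ends L) (theta_along L)"
  by (auto simp: orientation_def theta_along_def theta_E_def theta_V_def theta_ends_def path_vert_def)

lemma theta_along_tails_S:
  "0 < L \<Longrightarrow> {e \<in> theta_E q L. fst (theta_along L e) = S} = (\<lambda>i. (i, 0)) ` {..<q}"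
  by (auto simp: theta_along_def theta_E_def path_vert_def split: if_splits)

lemma theta_along_heads_S: "{e \<in> theta_E q L. snd (theta_along L e) = S} = {}"
  by (auto simp: theta_along_def theta_E_def path_vert_def split: if_splits)

lemma theta_along_tails_Inner:
  "i < q \<Longrightarrow> 0 < j \<Longrightarrow> j < L \<Longrightarrow> {e \<in> theta_E q L. fst (theta_along L e) = Inner i j} = {(i, j)}"
  by (auto simp: theta_along_def theta_E_def path_vert_def split: if_splits)

lemma theta_along_heads_Inner:
  "i < q \<Longrightarrow> 0 < j \<Longrightarrow> j < L \<Longrightarrow> {e \<in> theta_E q L. snd (theta_along L e) = Inner i j} = {(i, j - 1)}"
  by (auto simp: theta_along_def theta_E_def path_vert_def split: if_splits)

lemma flow_boundary_theta_along_S: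
  assumes "0 < L" "f \<in> theta_E q L \<rightarrow> carrier (integer_mod_group n)"
  shows "flow_boundary (integer_mod_group n) (theta_E q L) (theta_along L) f S = (\<Sum>i<q. f (i, 0)) mod int n"
proof -
  have "(\<Sum>e\<in>(\<lambda>i. (i, 0)) ` {..<q}. f e) = (\<Sum>i<q. f (i, 0))"
    by (simp add: sum.reindex inj_on_def)
  then show ?thesis
    using assms by (simp add: flow_boundary_integer_mod_group finite_theta_E theta_along_tails_S
        theta_along_heads_S)
qed

lemma flow_boundary_theta_along_Inner:
  assumes "i < q" "0 < j" "j < L" "f \<in> theta_E q L \<rightarrow> carrier (integer_mod_group n)"
  shows "flow_boundary (integer_mod_group n) (theta_E q L) (theta_along L) f (Inner i j)
    = (f (i, j) - f (i, j - 1)) mod int n"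
  using assms by (simp add: flow_boundary_integer_mod_group finite_theta_E theta_along_tails_Inner
      theta_along_heads_Inner)

section \<open>No \<open>\<int>\<^sub>2\<^sup>k\<close>-connectivity for an odd number of paths\<close>

definition Z2pow_label :: "nat \<Rightarrow> nat \<Rightarrow> nat \<Rightarrow> int" where
  "Z2pow_label k j = (\<lambda>m\<in>{..<k}. if m = 0 then 0 else of_bool (bit j (m - 1)))"

lemma Z2pow_label_closed: "Z2pow_label k j \<in> carrier (Z2pow k)"
  by (auto simp: Z2pow_label_def carrier_Z2pow)

lemma Z2pow_label_surj:
  assumes x: "x \<in> carrier (Z2pow k)" and "x 0 = 0"
  obtains j where "j < 2 ^ (k - 1)" "Z2pow_label k j = x"
proof -
  define bs where "bs = map (\<lambda>n. x (Suc n) = 1) [0..<k - 1]"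
  define j :: nat where "j = horner_sum of_bool 2 bs"
  have "j < 2 ^ (k - 1)"
    using horner_sum_of_bool_2_less[of bs] by (simp add: j_def bs_def)
  have bit_j: "bit j n \<longleftrightarrow> n < k - 1 \<and> x (Suc n) = 1" for n
    by (auto simp: j_def bs_def bit_horner_sum_bit_iff)
  have "Z2pow_label k j m = x m" for m
  proof (cases "m < k")
    case True
    show ?thesis
    proof (cases m)
      case 0
      then show ?thesis
        using True \<open>x 0 = 0\<close> by (simp add: Z2pow_label_def)
    next
      case (Suc n)
      then show ?thesis
        using True bit_j[of n] Z2pow_coordinate_cases[OF x True] by (auto simp: Z2pow_label_def)
    qed
  next
    case False
    then have "x m = undefined"
      using PiE_arb[of x "{..<k}" "\<lambda>_. {0..<2}" m] x by (simp add: carrier_Z2pow)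
    with False show ?thesis
      by (simp add: Z2pow_label_def)
  qed
  then have "Z2pow_label k j = x"
    by (rule ext)
  with \<open>j < 2 ^ (k - 1)\<close> show thesis
    by (rule that)
qed

lemma parity_telescope:
  fixes g h :: "nat \<Rightarrow> int"
  assumes "\<And>j. Suc j < L \<Longrightarrow> (g j + g (Suc j)) mod 2 = (h j + h (Suc j)) mod 2" and "j < L"
  shows "(g j + h j) mod 2 = (g 0 + h 0) mod 2"
  using assms(2)
proof (induction j)
  case (Suc j)
  have "(g j + g (Suc j)) mod 2 = (h j + h (Suc j)) mod 2"
    using assms(1) Suc.prems .
  then have "(g (Suc j) + h (Suc j)) mod 2 = (g j + h j) mod 2"
    by (auto simp: mod2_eq_if split: if_splits)
  with Suc show ?case
    by simp
qed simp

lemma theta_Z2pow_flow_along_path: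
  assumes D: "orientation (theta_V q L) (theta_E q L) (theta_ends L) D"
    and f: "f \<in> theta_E q L \<rightarrow> carrier (Z2pow k)"
    and demand: "\<And>j. 0 < j \<Longrightarrow> j < L \<Longrightarrow> flow_boundary (Z2pow k) (theta_E q L) D f (Inner i j)
      = Z2pow_label k j \<otimes>\<^bsub>Z2pow k\<^esub> Z2pow_label k (j - 1)"
    and "i < q" "j < L" "m < k"
  shows "(f (i, j) m + Z2pow_label k j m) mod 2 = f (i, 0) m"
proof -
  have "(f (i, j) m + f (i, Suc j) m) mod 2 = (Z2pow_label k j m + Z2pow_label k (Suc j) m) mod 2"
    if "Suc j < L" for j
  proof -
    have "{e. e \<in> theta_E q L \<and> Inner i (Suc j) \<in> theta_ends L e} = {(i, j), (i, Suc j)}"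
      using theta_edges_at_Inner[of i q "Suc j" L] \<open>i < q\<close> that by simp
    then show ?thesis
      using flow_boundary_Z2pow[OF D finite_theta_E f \<open>m < k\<close>, of "Inner i (Suc j)"]
        demand[of "Suc j"] that \<open>m < k\<close>
      by (simp add: mult_Z2pow add.commute)
  qed
  then have "(f (i, j) m + Z2pow_label k j m) mod 2 = (f (i, 0) m + Z2pow_label k 0 m) mod 2"
    using \<open>j < L\<close> by (rule parity_telescope[where g = "\<lambda>j. f (i, j) m"])
  moreover have "f (i, 0) \<in> carrier (Z2pow k)"
    using f \<open>i < q\<close> \<open>j < L\<close> by (auto simp: theta_E_def)
  ultimately show ?thesis
    using Z2pow_coordinate_cases[of "f (i, 0)" k m] \<open>m < k\<close> by (auto simp: Z2pow_label_def)
qed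

text \<open>The labels of the edges of a path run through all vectors with vanishing first
  coordinate, so a nowhere-zero flow must start with first coordinate \<open>1\<close>.\<close>

lemma theta_Z2pow_first_edge:
  assumes D: "orientation (theta_V q L) (theta_E q L) (theta_ends L) D"
    and f: "f \<in> theta_E q L \<rightarrow> carrier (Z2pow k)" "\<forall>e\<in>theta_E q L. f e \<noteq> \<one>\<^bsub>Z2pow k\<^esub>"
    and demand: "\<And>j. 0 < j \<Longrightarrow> j < L \<Longrightarrow> flow_boundary (Z2pow k) (theta_E q L) D f (Inner i j)
      = Z2pow_label k j \<otimes>\<^bsub>Z2pow k\<^esub> Z2pow_label k (j - 1)"
    and "0 < k" "2 ^ (k - 1) \<le> L" "i < q"
  shows "f (i, 0) 0 = 1"
proof (rule ccontr)
  have "(0::nat) < 2 ^ (k - 1)"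
    by simp
  then have "0 < L"
    using assms(6) by (rule less_le_trans)
  then have e0: "(i, 0) \<in> theta_E q L"
    using \<open>i < q\<close> by (simp add: theta_E_def)
  assume "f (i, 0) 0 \<noteq> 1"
  then have "f (i, 0) 0 = 0"
    using Z2pow_coordinate_cases[of "f (i, 0)" k 0] f e0 \<open>0 < k\<close> by auto
  then obtain j where j: "j < 2 ^ (k - 1)" "Z2pow_label k j = f (i, 0)"
    using Z2pow_label_surj[of "f (i, 0)" k] f(1) e0 by blast
  then have "j < L" and e: "(i, j) \<in> theta_E q L"
    using assms(6,7) by (simp_all add: theta_E_def)
  have "f (i, j) \<in> carrier (Z2pow k)" "f (i, 0) \<in> carrier (Z2pow k)"
    using f(1) e e0 by blast+
  then have "f (i, j) m = 0" if "m < k" for m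
    using theta_Z2pow_flow_along_path[OF D f(1) demand \<open>i < q\<close> \<open>j < L\<close> that] j(2)
      Z2pow_coordinate_cases[of "f (i, j)" k m] Z2pow_coordinate_cases[of "f (i, 0)" k m] that
    by auto
  then show False
    using f e Z2pow_eq_one_iff[of "f (i, j)" k] by auto
qed

lemma theta_Z2pow_demand:
  obtains \<beta> where "\<beta> \<in> theta_V q L \<rightarrow>\<^sub>E carrier (Z2pow k)"
    "finprod (Z2pow k) \<beta> (theta_V q L) = \<one>\<^bsub>Z2pow k\<^esub>" "\<beta> S = \<one>\<^bsub>Z2pow k\<^esub>"
    "\<And>i j. i < q \<Longrightarrow> 0 < j \<Longrightarrow> j < L \<Longrightarrow> \<beta> (Inner i j) = Z2pow_label k j \<otimes>\<^bsub>Z2pow k\<^esub> Z2pow_label k (j - 1)"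
proof -
  interpret comm_group "Z2pow k"
    by (rule comm_group_Z2pow)
  define \<beta>\<^sub>0 where "\<beta>\<^sub>0 v =
    (case v of Inner i j \<Rightarrow> Z2pow_label k j \<otimes>\<^bsub>Z2pow k\<^esub> Z2pow_label k (j - 1) | _ \<Rightarrow> \<one>\<^bsub>Z2pow k\<^esub>)" for v
  have "T \<in> theta_V q L"
    by (simp add: theta_V_def)
  moreover have "\<beta>\<^sub>0 \<in> theta_V q L - {T} \<rightarrow> carrier (Z2pow k)"
    by (auto simp: \<beta>\<^sub>0_def Z2pow_label_closed split: pvert.split)
  ultimately obtain \<beta> where \<beta>: "\<beta> \<in> theta_V q L \<rightarrow>\<^sub>E carrier (Z2pow k)"
    "finprod (Z2pow k) \<beta> (theta_V q L) = \<one>\<^bsub>Z2pow k\<^esub>" and \<beta>_eq: "\<And>v. v \<in> theta_V q L - {T} \<Longrightarrow> \<beta> v = \<beta>\<^sub>0 v"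
    by (rule zero_sum_extension[OF finite_theta_V]) auto
  show thesis
  proof (rule that[OF \<beta>])
    show "\<beta> S = \<one>\<^bsub>Z2pow k\<^esub>"
      using \<beta>_eq[of S] by (simp add: theta_V_def \<beta>\<^sub>0_def)
    show "\<beta> (Inner i j) = Z2pow_label k j \<otimes>\<^bsub>Z2pow k\<^esub> Z2pow_label k (j - 1)"
      if "i < q" "0 < j" "j < L" for i j
      using \<beta>_eq[of "Inner i j"] that by (simp add: theta_V_def \<beta>\<^sub>0_def)
  qed
qed

lemma theta_not_Z2pow_connected:
  assumes "0 < k" "odd q" "2 ^ (k - 1) \<le> L"
  shows "\<not> group_connected (Z2pow k) (theta_V q L) (theta_E q L) (theta_ends L)"
proof
  obtain \<beta> where \<beta>: "\<beta> \<in> theta_V q L \<rightarrow>\<^sub>E carrier (Z2pow k)"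
    "finprod (Z2pow k) \<beta> (theta_V q L) = \<one>\<^bsub>Z2pow k\<^esub>" "\<beta> S = \<one>\<^bsub>Z2pow k\<^esub>"
    and \<beta>_Inner: "\<And>i j. i < q \<Longrightarrow> 0 < j \<Longrightarrow> j < L \<Longrightarrow>
      \<beta> (Inner i j) = Z2pow_label k j \<otimes>\<^bsub>Z2pow k\<^esub> Z2pow_label k (j - 1)"
    by (rule theta_Z2pow_demand[of q L k]) auto
  assume "group_connected (Z2pow k) (theta_V q L) (theta_E q L) (theta_ends L)"
  then obtain D where D: "orientation (theta_V q L) (theta_E q L) (theta_ends L) D"
    and flows: "\<forall>\<beta> \<in> theta_V q L \<rightarrow>\<^sub>E carrier (Z2pow k). finprod (Z2pow k) \<beta> (theta_V q L) = \<one>\<^bsub>Z2pow k\<^esub> \<longrightarrow>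
      (\<exists>f \<in> theta_E q L \<rightarrow>\<^sub>E carrier (Z2pow k). (\<forall>e\<in>theta_E q L. f e \<noteq> \<one>\<^bsub>Z2pow k\<^esub>) \<and>
         (\<forall>v\<in>theta_V q L. flow_boundary (Z2pow k) (theta_E q L) D f v = \<beta> v))"
    unfolding group_connected_iff by blast
  obtain f where f: "f \<in> theta_E q L \<rightarrow>\<^sub>E carrier (Z2pow k)"
    and f_nonzero: "\<forall>e\<in>theta_E q L. f e \<noteq> \<one>\<^bsub>Z2pow k\<^esub>"
    and boundary: "\<forall>v\<in>theta_V q L. flow_boundary (Z2pow k) (theta_E q L) D f v = \<beta> v"
    using mp[OF bspec[OF flows \<beta>(1)] \<beta>(2)] by blast
  have f_Pi: "f \<in> theta_E q L \<rightarrow> carrier (Z2pow k)"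
    using f by (simp add: PiE_def)
  have "flow_boundary (Z2pow k) (theta_E q L) D f (Inner i j) = Z2pow_label k j \<otimes>\<^bsub>Z2pow k\<^esub> Z2pow_label k (j - 1)"
    if "i < q" "0 < j" "j < L" for i j
    using boundary \<beta>_Inner[OF that] that by (simp add: theta_V_def)
  then have first_edges: "f (i, 0) 0 = 1" if "i < q" for i
    using theta_Z2pow_first_edge[OF D f_Pi f_nonzero] assms(1,3) that by blast
  have "(0::nat) < 2 ^ (k - 1)"
    by simp
  then have "0 < L"
    using assms(3) by (rule less_le_trans)
  then have "(\<Sum>e | e \<in> theta_E q L \<and> S \<in> theta_ends L e. f e 0) = (\<Sum>i<q. f (i, 0) 0)"
    using theta_edges_at_S[of L q] by (simp add: sum.reindex inj_on_def)
  also have "\<dots> = int q"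
    using first_edges by simp
  finally have "int q mod 2 = flow_boundary (Z2pow k) (theta_E q L) D f S 0"
    using flow_boundary_Z2pow[OF D finite_theta_E f_Pi \<open>0 < k\<close>, of S] by simp
  also have "\<dots> = 0"
    using boundary \<beta>(3) \<open>0 < k\<close> by (simp add: theta_V_def one_Z2pow)
  finally show False
    using \<open>odd q\<close> by presburger
qed

section \<open>Subset sums modulo a prime\<close>

lemma shift_closed_residues_eq:
  fixes R :: "int set" and n d :: int
  assumes "R \<subseteq> {0..<n}" "0 \<in> R" "\<forall>r\<in>R. (r + d) mod n \<in> R" "coprime d n"
  shows "R = {0..<n}"
proof
  have multiples: "(int m * d) mod n \<in> R" for m :: nat
  proof (induction m)
    case (Suc m)
    then have "((int m * d) mod n + d) mod n \<in> R"
      using assms(3) by blast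
    then show ?case
      by (simp add: mod_add_right_eq algebra_simps)
  qed (use assms(2) in simp)
  obtain u v where uv: "u * d + v * n = 1"
    using bezout_int[of d n] assms(4) by (metis coprime_iff_gcd_eq_1)
  show "{0..<n} \<subseteq> R"
  proof
    fix t assume t: "t \<in> {0..<n}"
    have "t = t * (u * d + v * n)"
      using uv by simp
    also have "\<dots> = t * u * d + (t * v) * n"
      by (simp add: algebra_simps)
    finally have "(t * u * d) mod n = t"
      using t by (metis mod_mult_self1 atLeastLessThan_iff mod_pos_pos_trivial)
    moreover have "(int (nat ((t * u) mod n)) * d) mod n = (t * u * d) mod n"
      using t by (simp add: mod_mult_left_eq)
    ultimately show "t \<in> R"
      using multiples by metis
  qed
qed (use assms(1) in simp)

definition subset_sum_residues :: "nat \<Rightarrow> (nat \<Rightarrow> int) \<Rightarrow> nat \<Rightarrow> int set" where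
  "subset_sum_residues p d n = (\<lambda>I. (\<Sum>i\<in>I. d i) mod int p) ` Pow {..<n}"

lemma finite_subset_sum_residues: "finite (subset_sum_residues p d n)"
  by (simp add: subset_sum_residues_def)

lemma subset_sum_residues_subset: "0 < p \<Longrightarrow> subset_sum_residues p d n \<subseteq> {0..<int p}"
  by (auto simp: subset_sum_residues_def)

lemma zero_in_subset_sum_residues: "0 \<in> subset_sum_residues p d n"
  unfolding subset_sum_residues_def by (rule image_eqI[of _ _ "{}"]) auto

lemma subset_sum_residues_mono: "subset_sum_residues p d n \<subseteq> subset_sum_residues p d (Suc n)"
  unfolding subset_sum_residues_def by (rule image_mono) auto

lemma subset_sum_residues_shift:
  assumes "r \<in> subset_sum_residues p d n"
  shows "(r + d n) mod int p \<in> subset_sum_residues p d (Suc n)"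
proof -
  obtain I where I: "I \<subseteq> {..<n}" "r = (\<Sum>i\<in>I. d i) mod int p"
    using assms by (auto simp: subset_sum_residues_def)
  moreover have "n \<notin> I" "finite I"
    using I(1) by (auto intro: finite_subset)
  ultimately have "(r + d n) mod int p = (\<Sum>i\<in>insert n I. d i) mod int p"
    by (simp add: mod_add_left_eq mod_add_right_eq add.commute)
  moreover have "insert n I \<in> Pow {..<Suc n}"
    using I by auto
  ultimately show ?thesis
    unfolding subset_sum_residues_def by blast
qed

text \<open>Each new summand prime to \<open>p\<close> enlarges the set of subset sums, unless this set is
  already closed under adding it, hence everything.\<close>

lemma card_subset_sum_residues:
  assumes p: "Factorial_Ring.prime p" and "\<forall>i<n. \<not> int p dvd d i"
  shows "min p (n + 1) \<le> card (subset_sum_residues p d n)"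
  using assms(2)
proof (induction n)
  case 0
  have "1 \<le> card (subset_sum_residues p d 0)"
    using card_mono[OF finite_subset_sum_residues, of "{0}"] zero_in_subset_sum_residues by simp
  then show ?case
    by (simp add: min_le_iff_disj)
next
  case (Suc n)
  let ?R = "subset_sum_residues p d"
  have card_mono_Suc: "card (?R n) \<le> card (?R (Suc n))"
    by (rule card_mono[OF finite_subset_sum_residues subset_sum_residues_mono])
  show ?case
  proof (cases "\<forall>r\<in>?R n. (r + d n) mod int p \<in> ?R n")
    case True
    have "0 < p"
      using p by (rule prime_gt_0_nat)
    have "coprime (d n) (int p)"
      using Suc.prems p by (auto intro: prime_imp_coprime simp: coprime_commute)
    with True have "?R n = {0..<int p}"
      by (intro shift_closed_residues_eq subset_sum_residues_subset zero_in_subset_sum_residues \<open>0 < p\<close>)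
    then have "p \<le> card (?R (Suc n))"
      using card_mono_Suc by simp
    then show ?thesis
      by (simp add: min_le_iff_disj)
  next
    case False
    then obtain r where r: "r \<in> ?R n" "(r + d n) mod int p \<notin> ?R n"
      by blast
    have "card (insert ((r + d n) mod int p) (?R n)) = card (?R n) + 1"
      using r(2) finite_subset_sum_residues[of p d n] by simp
    moreover have "insert ((r + d n) mod int p) (?R n) \<subseteq> ?R (Suc n)"
      using subset_sum_residues_shift[OF r(1)] subset_sum_residues_mono by blast
    ultimately have "card (?R n) + 1 \<le> card (?R (Suc n))"
      using card_mono[OF finite_subset_sum_residues] by metis
    moreover have "min p (n + 1) \<le> card (?R n)"
      using Suc by simp
    ultimately show ?thesis
      by (simp add: min_def split: if_splits)
  qed
qed

lemma subset_sum_residues_cover: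
  fixes p :: nat and d :: "nat \<Rightarrow> int"
  assumes "Factorial_Ring.prime p" "\<forall>i<n. \<not> int p dvd d i" "p \<le> n + 1"
  shows "\<exists>I \<subseteq> {..<n}. (\<Sum>i\<in>I. d i) mod int p = t mod int p"
proof -
  let ?R = "subset_sum_residues p d n"
  have "0 < p"
    using assms(1) by (rule prime_gt_0_nat)
  then have "?R \<subseteq> {0..<int p}"
    by (rule subset_sum_residues_subset)
  moreover have "card {0..<int p} \<le> card ?R"
    using card_subset_sum_residues[OF assms(1,2)] assms(3) by simp
  ultimately have "?R = {0..<int p}"
    using card_mono[of "{0..<int p}" ?R] by (intro card_subset_eq) auto
  moreover have "t mod int p \<in> {0..<int p}"
    using \<open>0 < p\<close> by simp
  ultimately have "t mod int p \<in> ?R"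
    by simp
  then obtain I where "I \<subseteq> {..<n}" "t mod int p = (\<Sum>i\<in>I. d i) mod int p"
    by (auto simp: subset_sum_residues_def)
  then show ?thesis
    by auto
qed

lemma sum_choice_residues_cover:
  fixes p :: nat and A :: "nat \<Rightarrow> int set"
  assumes "Factorial_Ring.prime p" "p \<le> n + 1"
    and "\<And>i. i < n \<Longrightarrow> \<exists>x\<in>A i. \<exists>y\<in>A i. x mod int p \<noteq> y mod int p"
  obtains a where "\<And>i. i < n \<Longrightarrow> a i \<in> A i" "(\<Sum>i<n. a i) mod int p = t mod int p"
proof -
  have "\<forall>i<n. \<exists>x y. x \<in> A i \<and> y \<in> A i \<and> x mod int p \<noteq> y mod int p"
    using assms(3) by blast
  then obtain x y where xy: "\<forall>i<n. x i \<in> A i \<and> y i \<in> A i \<and> x i mod int p \<noteq> y i mod int p"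
    by metis
  then have "\<forall>i<n. \<not> int p dvd y i - x i"
    by (auto simp flip: mod_eq_dvd_iff)
  from subset_sum_residues_cover[OF assms(1) this assms(2)]
  obtain I where I: "I \<subseteq> {..<n}" "(\<Sum>i\<in>I. y i - x i) mod int p = (t - (\<Sum>i<n. x i)) mod int p"
    by blast
  define a where "a i = (if i \<in> I then y i else x i)" for i
  have "(\<Sum>i<n. a i) = (\<Sum>i<n. x i + (if i \<in> I then y i - x i else 0))"
    by (intro sum.cong) (auto simp: a_def)
  also have "\<dots> = (\<Sum>i<n. x i) + (\<Sum>i\<in>{..<n} \<inter> I. y i - x i)"
    by (simp add: sum.distrib sum.inter_restrict)
  also have "{..<n} \<inter> I = I"
    using I(1) by blast
  finally have "(\<Sum>i<n. a i) mod int p = ((\<Sum>i<n. x i) + (\<Sum>i\<in>I. y i - x i) mod int p) mod int p"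
    by (simp add: mod_add_right_eq)
  also have "\<dots> = t mod int p"
    using I(2) by (simp add: mod_add_right_eq)
  finally have a_sum: "(\<Sum>i<n. a i) mod int p = t mod int p" .
  have a_mem: "a i \<in> A i" if "i < n" for i
    using xy that by (simp add: a_def)
  from a_mem a_sum show thesis
    by (rule that)
qed

lemma two_residues_avoiding:
  fixes c :: "nat \<Rightarrow> int"
  assumes "L + 2 \<le> n"
  shows "\<exists>x\<in>{a. \<forall>j<L. (a + c j) mod int n \<noteq> 0}. \<exists>y\<in>{a. \<forall>j<L. (a + c j) mod int n \<noteq> 0}.
    x mod int n \<noteq> y mod int n"
proof -
  define F where "F = (\<lambda>j. (- c j) mod int n) ` {..<L}"
  define A where "A = {0..<int n} - F"
  have avoid: "(x + c j) mod int n \<noteq> 0" if "x \<in> A" "j < L" for x j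
  proof
    assume "(x + c j) mod int n = 0"
    then have "x mod int n = (- c j) mod int n"
      by (metis add.commute add_diff_cancel_left' diff_0 mod_diff_left_eq)
    then show False
      using that by (auto simp: A_def F_def)
  qed
  have "card F \<le> L"
    unfolding F_def using card_image_le[of "{..<L}"] by simp
  moreover have "card {0..<int n} - card F \<le> card A"
    unfolding A_def F_def by (rule diff_card_le_card_Diff) simp
  ultimately have "2 \<le> card A"
    using assms by simp
  then obtain x where "x \<in> A"
    by (metis card.empty ex_in_conv not_numeral_le_zero)
  have "A - {x} \<noteq> {}"
  proof
    assume "A - {x} = {}"
    then have "card A - 1 = 0"
      by (metis card.empty card_Diff_singleton[OF \<open>x \<in> A\<close>])
    with \<open>2 \<le> card A\<close> show False
      by simp
  qed
  then obtain y where "y \<in> A" "y \<noteq> x"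
    by blast
  then have "x mod int n \<noteq> y mod int n"
    using \<open>x \<in> A\<close> by (auto simp: A_def)
  moreover have "x \<in> {a. \<forall>j<L. (a + c j) mod int n \<noteq> 0}" "y \<in> {a. \<forall>j<L. (a + c j) mod int n \<noteq> 0}"
    using avoid \<open>x \<in> A\<close> \<open>y \<in> A\<close> by auto
  ultimately show ?thesis
    by (intro bexI)
qed

section \<open>\<open>\<int>\<^sub>p\<close>-connectivity for many paths\<close>

definition theta_path_flow ::
  "nat \<Rightarrow> nat \<Rightarrow> nat \<Rightarrow> (pvert \<Rightarrow> int) \<Rightarrow> (nat \<Rightarrow> int) \<Rightarrow> nat \<times> nat \<Rightarrow> int" where
  "theta_path_flow q L p \<beta> a = (\<lambda>(i, j)\<in>theta_E q L. (a i + (\<Sum>m\<in>{1..j}. \<beta> (Inner i m))) mod int p)"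

lemma theta_path_flow_closed:
  "theta_path_flow q L p \<beta> a \<in> theta_E q L \<rightarrow>\<^sub>E carrier (integer_mod_group p)"
  by (auto simp: theta_path_flow_def mod_in_carrier_integer_mod_group)

lemma flow_boundary_theta_path_flow_S:
  assumes "0 < L"
  shows "flow_boundary (integer_mod_group p) (theta_E q L) (theta_along L) (theta_path_flow q L p \<beta> a) S
    = (\<Sum>i<q. a i) mod int p"
proof -
  have "flow_boundary (integer_mod_group p) (theta_E q L) (theta_along L) (theta_path_flow q L p \<beta> a) S
      = (\<Sum>i<q. a i mod int p) mod int p"
    using flow_boundary_theta_along_S[OF assms] theta_path_flow_closed[of q L p \<beta> a] assms
    by (simp add: PiE_def theta_path_flow_def theta_E_def)
  then show ?thesis
    by (simp add: mod_sum_eq)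
qed

lemma flow_boundary_theta_path_flow_Inner:
  assumes "i < q" "0 < j" "j < L"
  shows "flow_boundary (integer_mod_group p) (theta_E q L) (theta_along L) (theta_path_flow q L p \<beta> a)
    (Inner i j) = \<beta> (Inner i j) mod int p"
proof -
  let ?c = "\<lambda>j. \<Sum>m\<in>{1..j}. \<beta> (Inner i m)"
  have "flow_boundary (integer_mod_group p) (theta_E q L) (theta_along L) (theta_path_flow q L p \<beta> a)
      (Inner i j) = ((a i + ?c j) mod int p - (a i + ?c (j - 1)) mod int p) mod int p"
    using flow_boundary_theta_along_Inner[OF assms] theta_path_flow_closed[of q L p \<beta> a] assms
    by (simp add: PiE_def theta_path_flow_def theta_E_def)
  also have "\<dots> = (?c j - ?c (j - 1)) mod int p"
    by (simp add: mod_diff_eq)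
  also have "?c j - ?c (j - 1) = \<beta> (Inner i j)"
    using \<open>0 < j\<close> by (cases j) simp_all
  finally show ?thesis .
qed

lemma theta_Zp_connected:
  assumes p: "Factorial_Ring.prime p" and "L + 2 \<le> p" "0 < L" "p \<le> q + 1"
  shows "group_connected (integer_mod_group p) (theta_V q L) (theta_E q L) (theta_ends L)"
  unfolding group_connected_iff
proof (intro exI[of _ "theta_along L"] conjI orientation_theta_along ballI impI)
  interpret comm_group "integer_mod_group p"
    by simp
  fix \<beta> assume \<beta>: "\<beta> \<in> theta_V q L \<rightarrow>\<^sub>E carrier (integer_mod_group p)"
    and \<beta>_sum: "finprod (integer_mod_group p) \<beta> (theta_V q L) = \<one>\<^bsub>integer_mod_group p\<^esub>"
  have \<beta>_mod: "\<beta> v mod int p = \<beta> v" if "v \<in> theta_V q L" for v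
    using \<beta> that prime_gt_0_nat[OF p] by (auto simp: PiE_iff carrier_integer_mod_group)
  define A where "A i = {x. \<forall>j<L. (x + (\<Sum>m\<in>{1..j}. \<beta> (Inner i m))) mod int p \<noteq> 0}" for i
  have two_choices: "\<exists>x\<in>A i. \<exists>y\<in>A i. x mod int p \<noteq> y mod int p" for i
    unfolding A_def by (rule two_residues_avoiding[OF assms(2)])
  obtain a where a: "\<And>i. i < q \<Longrightarrow> a i \<in> A i" and a_sum: "(\<Sum>i<q. a i) mod int p = \<beta> S mod int p"
    by (rule sum_choice_residues_cover[OF p assms(4), where A = A, OF two_choices]) auto
  define f where "f = theta_path_flow q L p \<beta> a"
  let ?bd = "flow_boundary (integer_mod_group p) (theta_E q L) (theta_along L) f"
  have f: "f \<in> theta_E q L \<rightarrow>\<^sub>E carrier (integer_mod_group p)"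
    unfolding f_def by (rule theta_path_flow_closed)
  then have f_Pi: "f \<in> theta_E q L \<rightarrow> carrier (integer_mod_group p)"
    by (simp add: PiE_def)
  have f_nonzero: "\<forall>e\<in>theta_E q L. f e \<noteq> \<one>\<^bsub>integer_mod_group p\<^esub>"
    using a by (auto simp: f_def theta_path_flow_def theta_E_def A_def)
  have boundary_except_T: "\<forall>v\<in>theta_V q L - {T}. ?bd v = \<beta> v"
    using flow_boundary_theta_path_flow_S[OF \<open>0 < L\<close>] flow_boundary_theta_path_flow_Inner
      a_sum \<beta>_mod by (auto simp: f_def theta_V_def)
  have "?bd T = \<beta> T"
  proof (rule eq_at_last_if_finprod_eq[OF finite_theta_V])
    show "T \<in> theta_V q L"
      by (simp add: theta_V_def)
    show "?bd \<in> theta_V q L \<rightarrow> carrier (integer_mod_group p)"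
      using f_Pi by (simp add: flow_boundary_closed finite_theta_E)
    show "\<beta> \<in> theta_V q L \<rightarrow> carrier (integer_mod_group p)"
      using \<beta> by (simp add: PiE_def)
    show "finprod (integer_mod_group p) ?bd (theta_V q L) = finprod (integer_mod_group p) \<beta> (theta_V q L)"
      using finprod_flow_boundary[OF orientation_theta_along finite_theta_V finite_theta_E f_Pi] \<beta>_sum
      by simp
  qed (rule boundary_except_T)
  with boundary_except_T have boundary: "\<forall>v\<in>theta_V q L. ?bd v = \<beta> v"
    by blast
  show "\<exists>g\<in>theta_E q L \<rightarrow>\<^sub>E carrier (integer_mod_group p).
      (\<forall>e\<in>theta_E q L. g e \<noteq> \<one>\<^bsub>integer_mod_group p\<^esub>) \<and>
      (\<forall>v\<in>theta_V q L. flow_boundary (integer_mod_group p) (theta_E q L) (theta_along L) g v = \<beta> v)"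
    by (intro bexI[of _ f] conjI f f_nonzero boundary)
qed

theorem theorem3p2:
  fixes k p :: nat
  assumes "k \<ge> 1"
    and "Factorial_Ring.prime p" and "p > 2 ^ (k - 1) + 1"
    and "\<forall>r::nat. Factorial_Ring.prime r \<and> r > 2 ^ (k - 1) + 1 \<longrightarrow> p \<le> r"
  shows "(\<forall>q::nat. odd q \<longrightarrow>
            \<not> group_connected (Z2pow k) (theta_V q (2 ^ (k - 1))) (theta_E q (2 ^ (k - 1)))
                (theta_ends (2 ^ (k - 1))))
       \<and> (\<forall>q::nat. q \<ge> p \<longrightarrow>
            group_connected (integer_mod_group p) (theta_V q (2 ^ (k - 1))) (theta_E q (2 ^ (k - 1)))
                (theta_ends (2 ^ (k - 1))))"
proof (intro conjI allI impI)
  fix q :: nat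
  assume "odd q"
  then show "\<not> group_connected (Z2pow k) (theta_V q (2 ^ (k - 1))) (theta_E q (2 ^ (k - 1)))
      (theta_ends (2 ^ (k - 1)))"
    using assms(1) by (intro theta_not_Z2pow_connected) auto
next
  fix q :: nat
  assume "q \<ge> p"
  then show "group_connected (integer_mod_group p) (theta_V q (2 ^ (k - 1))) (theta_E q (2 ^ (k - 1)))
      (theta_ends (2 ^ (k - 1)))"
    using assms(2,3) by (intro theta_Zp_connected) auto
qed

end
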